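(* Let $\alpha$ be an algebraic number. If the minimal polynomial of $\alpha$ over $\mathbb{Q}$ contains a nonzero term of odd degree, then $\mathbb{Q}(\alpha) = \mathbb{Q}(\alpha^2)$. Consequently, for any real number field $K$, the set of generators $\alpha$ of $K$ (i.e. $\mathbb{Q}(\alpha)=K$) whose minimal polynomial contains a nonzero term of odd degree is dense in $\mathbb{R}$.
   Context: A real number field is a field $K\subset\mathbb{R}$ with $[K:\mathbb{Q}]<\infty$. *)

theory Defs
  imports "HOL-Analysis.Analysis" "HOL-Computational_Algebra.Polynomial"
begin

definition is_subfield :: "'a::field_char_0 set \<Rightarrow> bool" where
  "is_subfield K \<longleftrightarrow> 0 \<in> K \<and> 1 \<in> K \<and>
     (\<forall>x\<in>K. \<forall>y\<in>K. x + y \<in> K \<and> x - y \<in> K \<and> x * y \<in> K) \<and>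
     (\<forall>x\<in>K. x \<noteq> 0 \<longrightarrow> inverse x \<in> K)"

definition gen_field :: "'a::field_char_0 \<Rightarrow> 'a set" where
  "gen_field a = \<Inter> {K. is_subfield K \<and> a \<in> K}"

definition is_min_poly :: "'a::field_char_0 \<Rightarrow> rat poly \<Rightarrow> bool" where
  "is_min_poly a p \<longleftrightarrow> p \<noteq> 0 \<and> lead_coeff p = 1 \<and>
     poly (map_poly of_rat p) a = 0 \<and>
     (\<forall>q :: rat poly. q \<noteq> 0 \<and> poly (map_poly of_rat q) a = 0 \<longrightarrow> degree p \<le> degree q)"

definition min_poly_has_odd_term :: "'a::field_char_0 \<Rightarrow> bool" where
  "min_poly_has_odd_term a \<longleftrightarrow>
     (\<exists>p. is_min_poly a p \<and> (\<exists>k. odd k \<and> coeff p k \<noteq> 0))"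

text \<open>A real number field: a subfield of R of finite degree over Q
  (finitely spanned as a Q-vector space).\<close>
definition real_number_field :: "real set \<Rightarrow> bool" where
  "real_number_field K \<longleftrightarrow> is_subfield K \<and>
     (\<exists>B. finite B \<and> B \<subseteq> K \<and>
        (\<forall>x\<in>K. \<exists>c :: real \<Rightarrow> rat. x = (\<Sum>b\<in>B. of_rat (c b) * b)))"

end

theory Submission
  imports Defs "HOL-Computational_Algebra.Fundamental_Theorem_Algebra"
begin

text \<open>
  Write the minimal polynomial as \<open>p(X) = E(X\<^sup>2) + X O(X\<^sup>2)\<close>. If \<open>p\<close> has an odd term,
  then \<open>O(X\<^sup>2)\<close> is a nonzero polynomial of degree below \<open>deg p\<close>, so \<open>O(\<alpha>\<^sup>2) \<noteq> 0\<close> and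
  \<open>\<alpha> = -E(\<alpha>\<^sup>2) / O(\<alpha>\<^sup>2) \<in> \<rat>(\<alpha>\<^sup>2)\<close>.

  For the density statement, a real number field is \<open>\<rat>(\<gamma>)\<close> by the primitive element
  theorem, and so is \<open>\<rat>(\<gamma> + q)\<close> for every rational \<open>q\<close>. The minimal polynomial of
  \<open>\<gamma> + q\<close> is \<open>p(X - q)\<close>; if \<open>d = deg p\<close> is even, its coefficient of \<open>X\<^bsup>d-1\<^esup>\<close> is
  \<open>p\<^sub>d\<^sub>-\<^sub>1 - d q\<close>, which vanishes for at most one \<open>q\<close>. So all but one rational
  translate of \<open>\<gamma>\<close> qualifies, and these are dense.
\<close>

section \<open>Subfields\<close>

context
  fixes K :: "'a::field_char_0 set"
  assumes K: "is_subfield K"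
begin

lemma subfield_0: "0 \<in> K"
  and subfield_1: "1 \<in> K"
  and subfield_add: "x \<in> K \<Longrightarrow> y \<in> K \<Longrightarrow> x + y \<in> K"
  and subfield_diff: "x \<in> K \<Longrightarrow> y \<in> K \<Longrightarrow> x - y \<in> K"
  and subfield_mult: "x \<in> K \<Longrightarrow> y \<in> K \<Longrightarrow> x * y \<in> K"
  using K by (simp_all add: is_subfield_def)

lemma subfield_inverse: "x \<in> K \<Longrightarrow> inverse x \<in> K"
  using K by (cases "x = 0") (auto simp: is_subfield_def)

lemma subfield_divide: "x \<in> K \<Longrightarrow> y \<in> K \<Longrightarrow> x / y \<in> K"
  by (simp add: divide_inverse subfield_mult subfield_inverse)

lemma subfield_uminus: "x \<in> K \<Longrightarrow> - x \<in> K"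
  using subfield_diff[of 0 x] subfield_0 by simp

lemma subfield_power: "x \<in> K \<Longrightarrow> x ^ n \<in> K"
  by (induction n) (auto intro: subfield_mult subfield_1)

lemma subfield_sum: "(\<And>i. i \<in> A \<Longrightarrow> f i \<in> K) \<Longrightarrow> sum f A \<in> K"
  by (induction A rule: infinite_finite_induct) (auto intro: subfield_add subfield_0)

lemma subfield_of_nat: "of_nat n \<in> K"
  by (induction n) (auto intro: subfield_add subfield_1 subfield_0)

lemma subfield_of_rat: "of_rat q \<in> K"
proof -
  obtain a b where "q = Fract a b" "b > 0"
    by (cases q) auto
  then have "(of_rat q :: 'a) = of_int a / of_int b"
    by (simp add: of_rat_rat)
  moreover have "(of_int n :: 'a) \<in> K" for n
    using subfield_of_nat[of "nat n"] subfield_uminus[OF subfield_of_nat[of "nat (- n)"]]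
    by (cases "n \<ge> 0") simp_all
  ultimately show ?thesis
    by (simp add: subfield_divide)
qed

lemma Rats_subset_subfield: "\<rat> \<subseteq> K"
  by (auto elim: Rats_cases simp: subfield_of_rat)

end

definition subfield_hull :: "'a::field_char_0 set \<Rightarrow> 'a set" where
  "subfield_hull S = \<Inter> {K. is_subfield K \<and> S \<subseteq> K}"

lemma is_subfield_Inter: "(\<And>K. K \<in> F \<Longrightarrow> is_subfield K) \<Longrightarrow> is_subfield (\<Inter> F)"
  unfolding is_subfield_def by blast

lemma is_subfield_subfield_hull: "is_subfield (subfield_hull S)"
  unfolding subfield_hull_def by (rule is_subfield_Inter) auto

lemma subfield_hull_subset: "S \<subseteq> subfield_hull S"
  unfolding subfield_hull_def by auto

lemma subfield_hull_minimal: "is_subfield K \<Longrightarrow> S \<subseteq> K \<Longrightarrow> subfield_hull S \<subseteq> K"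
  unfolding subfield_hull_def by auto

lemma subfield_hull_mono: "S \<subseteq> T \<Longrightarrow> subfield_hull S \<subseteq> subfield_hull T"
  by (meson is_subfield_subfield_hull order_trans subfield_hull_minimal subfield_hull_subset)

lemma gen_field_eq_subfield_hull: "gen_field a = subfield_hull {a}"
  unfolding gen_field_def subfield_hull_def by simp

lemma is_subfield_gen_field: "is_subfield (gen_field a)"
  by (simp add: gen_field_eq_subfield_hull is_subfield_subfield_hull)

lemma gen_field_self: "a \<in> gen_field a"
  using subfield_hull_subset[of "{a}"] by (simp add: gen_field_eq_subfield_hull)

lemma gen_field_minimal: "is_subfield K \<Longrightarrow> a \<in> K \<Longrightarrow> gen_field a \<subseteq> K"
  by (simp add: gen_field_eq_subfield_hull subfield_hull_minimal)

lemma gen_field_add_of_rat: "gen_field (a + of_rat q) = gen_field a"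
proof
  show "gen_field (a + of_rat q) \<subseteq> gen_field a"
    by (intro gen_field_minimal is_subfield_gen_field subfield_add gen_field_self subfield_of_rat)
  have "a = (a + of_rat q) - of_rat q"
    by simp
  also have "\<dots> \<in> gen_field (a + of_rat q)"
    by (intro is_subfield_gen_field subfield_diff gen_field_self subfield_of_rat)
  finally show "gen_field a \<subseteq> gen_field (a + of_rat q)"
    by (intro gen_field_minimal is_subfield_gen_field)
qed


lemma poly_map_of_rat_eq_sum:
  "poly (map_poly of_rat p) (x :: 'a::field_char_0) = (\<Sum>i\<le>degree p. of_rat (coeff p i) * x ^ i)"
  by (simp add: poly_altdef degree_map_poly coeff_map_poly)

lemma map_poly_of_rat_add:
  "map_poly (of_rat :: rat \<Rightarrow> 'a::field_char_0) (p + q) = map_poly of_rat p + map_poly of_rat q"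
  by (rule poly_eqI) (simp add: coeff_map_poly of_rat_add)

lemma map_poly_of_rat_mult:
  "map_poly (of_rat :: rat \<Rightarrow> 'a::field_char_0) (p * q) = map_poly of_rat p * map_poly of_rat q"
  by (rule poly_eqI) (simp add: coeff_map_poly coeff_mult of_rat_sum of_rat_mult)

lemma poly_map_of_rat_pcompose:
  "poly (map_poly of_rat (p \<circ>\<^sub>p q)) (x :: 'a::field_char_0) =
     poly (map_poly of_rat p) (poly (map_poly of_rat q) x)"
  by (induction p)
    (simp_all add: pcompose_pCons map_poly_of_rat_add map_poly_of_rat_mult map_poly_pCons)

lemma algebraic_imp_rat_poly_root:
  fixes x :: "'a::field_char_0"
  assumes "algebraic x"
  obtains p :: "rat poly" where "p \<noteq> 0" "poly (map_poly of_rat p) x = 0"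
proof -
  obtain p :: "int poly" where p: "p \<noteq> 0" "poly (map_poly of_int p) x = 0"
    using assms by (erule algebraicE')
  have "map_poly (of_rat :: rat \<Rightarrow> 'a) (map_poly of_int p) = map_poly of_int p"
    by (simp add: map_poly_map_poly o_def)
  moreover have "map_poly (of_int :: int \<Rightarrow> rat) p \<noteq> 0"
    using p(1) by (simp add: map_poly_eq_0_iff)
  ultimately show ?thesis
    using p(2) by (intro that[of "map_poly of_int p"]) auto
qed

lemma obtain_monic_least_degree:
  fixes S :: "'a::field poly set"
  assumes "p \<in> S" "0 \<notin> S" "\<And>q. q \<in> S \<Longrightarrow> smult (inverse (lead_coeff q)) q \<in> S"
  obtains m where "m \<in> S" "lead_coeff m = 1" "\<And>q. q \<in> S \<Longrightarrow> degree m \<le> degree q"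
proof -
  obtain m where m: "m \<in> S" "\<And>q. q \<in> S \<Longrightarrow> degree m \<le> degree q"
    using ex_has_least_nat[of "\<lambda>q. q \<in> S" p degree] assms(1) by blast
  then have "m \<noteq> 0"
    using assms(2) by auto
  then show ?thesis
    using m assms(3)[OF m(1)] by (intro that[of "smult (inverse (lead_coeff m)) m"]) auto
qed

lemma is_min_poly_exists:
  fixes x :: "'a::field_char_0"
  assumes "algebraic x"
  shows "\<exists>p. is_min_poly x p"
proof -
  define S where "S = {p :: rat poly. p \<noteq> 0 \<and> poly (map_poly of_rat p) x = 0}"
  obtain p where "p \<in> S"
    using assms by (rule algebraic_imp_rat_poly_root) (auto simp: S_def)
  moreover have "map_poly (of_rat :: rat \<Rightarrow> 'a) (smult c q) = smult (of_rat c) (map_poly of_rat q)"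
    for c q
    by (rule poly_eqI) (simp add: coeff_map_poly of_rat_mult)
  ultimately obtain m where "m \<in> S" "lead_coeff m = 1" "\<And>q. q \<in> S \<Longrightarrow> degree m \<le> degree q"
    using obtain_monic_least_degree[of p S] by (auto simp: S_def)
  then show ?thesis
    unfolding is_min_poly_def S_def by blast
qed

text \<open>In the notation above, \<open>even_part p = E(X\<^sup>2)\<close> and \<open>odd_part p = O(X\<^sup>2)\<close>.\<close>

definition even_part :: "'a::comm_monoid_add poly \<Rightarrow> 'a poly" where
  "even_part p = (\<Sum>i\<le>degree p. monom (if even i then coeff p i else 0) i)"

definition odd_part :: "'a::comm_monoid_add poly \<Rightarrow> 'a poly" where
  "odd_part p = (\<Sum>i\<le>degree p. monom (if even i then coeff p (Suc i) else 0) i)"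

lemma coeff_even_part: "coeff (even_part p) i = (if even i then coeff p i else 0)"
  by (auto simp: even_part_def coeff_sum coeff_eq_0)

lemma coeff_odd_part: "coeff (odd_part p) i = (if even i then coeff p (Suc i) else 0)"
  by (auto simp: odd_part_def coeff_sum coeff_eq_0)

lemma even_part_add_odd_part: "even_part p + [:0, 1:] * odd_part p = (p :: 'a::comm_semiring_1 poly)"
  by (rule poly_eqI) (auto simp: coeff_even_part coeff_odd_part coeff_pCons split: nat.split)

lemma degree_odd_part_less: "degree p > 0 \<Longrightarrow> degree (odd_part p) < degree p"
  by (rule le_less_trans[of _ "degree p - 1"], rule degree_le) (auto simp: coeff_odd_part coeff_eq_0)

lemma poly_map_of_rat_in_subfield_if_even:
  fixes x :: "'a::field_char_0"
  assumes K: "is_subfield K" and x2: "x\<^sup>2 \<in> K" and even: "\<And>i. odd i \<Longrightarrow> coeff p i = 0"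
  shows "poly (map_poly of_rat p) x \<in> K"
proof -
  have "of_rat (coeff p i) * x ^ i \<in> K" for i
  proof (cases "even i")
    case True
    then have "x ^ i = (x\<^sup>2) ^ (i div 2)"
      by (simp flip: power_mult)
    then show ?thesis
      using K x2 by (simp add: subfield_mult subfield_of_rat subfield_power)
  qed (simp add: even subfield_0[OF K])
  then show ?thesis
    by (simp add: poly_map_of_rat_eq_sum subfield_sum[OF K])
qed


section \<open>The field generated by the square\<close>

lemma gen_field_eq_gen_field_square:
  fixes a :: "'a::field_char_0"
  assumes min: "is_min_poly a p" and k: "odd k" "coeff p k \<noteq> 0"
  shows "gen_field a = gen_field (a\<^sup>2)"
proof
  show "gen_field (a\<^sup>2) \<subseteq> gen_field a"
    by (intro gen_field_minimal is_subfield_gen_field subfield_power gen_field_self)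
next
  define L where "L = gen_field (a\<^sup>2)"
  have L: "is_subfield L" "a\<^sup>2 \<in> L"
    by (simp_all add: L_def is_subfield_gen_field gen_field_self)
  define Ev Od where "Ev = poly (map_poly of_rat (even_part p)) a"
    and "Od = poly (map_poly of_rat (odd_part p)) a"
  have Ev: "Ev \<in> L" and Od: "Od \<in> L"
    unfolding Ev_def Od_def
    by (auto intro!: poly_map_of_rat_in_subfield_if_even L simp: coeff_even_part coeff_odd_part)
  have "Ev + a * Od = 0"
    using min unfolding Ev_def Od_def is_min_poly_def
    by (subst (asm) (2) even_part_add_odd_part[symmetric, of p])
      (simp add: map_poly_of_rat_add map_poly_of_rat_mult map_poly_pCons)
  have "odd_part p \<noteq> 0"
  proof
    assume "odd_part p = 0"
    then have "coeff p (Suc (k - 1)) = 0"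
      using k(1) coeff_odd_part[of p "k - 1"] by (simp split: if_splits)
    with k show False
      by simp
  qed
  moreover have "degree (odd_part p) < degree p"
    using le_degree[OF k(2)] odd_pos[OF k(1)] by (intro degree_odd_part_less) linarith
  ultimately have "Od \<noteq> 0"
    using min unfolding Od_def is_min_poly_def by (auto simp: not_le[symmetric])
  moreover have "a * Od = - Ev"
    using \<open>Ev + a * Od = 0\<close> by (simp add: eq_neg_iff_add_eq_0 add.commute)
  ultimately have "a = - Ev / Od"
    by (metis nonzero_mult_div_cancel_right)
  also have "\<dots> \<in> L"
    by (intro subfield_divide subfield_uminus L Ev Od)
  finally show "gen_field a \<subseteq> gen_field (a\<^sup>2)"
    unfolding L_def by (intro gen_field_minimal is_subfield_gen_field)
qed


definition poly_over :: "'a::field_char_0 set \<Rightarrow> 'a poly \<Rightarrow> bool" where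
  "poly_over L p \<longleftrightarrow> (\<forall>i. coeff p i \<in> L)"

context
  fixes L :: "'a::field_char_0 set"
  assumes L: "is_subfield L"
begin

lemma poly_over_0: "poly_over L 0"
  by (simp add: poly_over_def subfield_0[OF L])

lemma poly_over_add: "poly_over L p \<Longrightarrow> poly_over L q \<Longrightarrow> poly_over L (p + q)"
  by (simp add: poly_over_def subfield_add[OF L])

lemma poly_over_diff: "poly_over L p \<Longrightarrow> poly_over L q \<Longrightarrow> poly_over L (p - q)"
  by (simp add: poly_over_def subfield_diff[OF L])

lemma poly_over_mult: "poly_over L p \<Longrightarrow> poly_over L q \<Longrightarrow> poly_over L (p * q)"
  by (auto simp: poly_over_def coeff_mult intro!: subfield_sum[OF L] subfield_mult[OF L])

lemma poly_over_monom: "c \<in> L \<Longrightarrow> poly_over L (monom c n)"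
  by (simp add: poly_over_def subfield_0[OF L])

lemma poly_over_pCons: "poly_over L (pCons c p) \<longleftrightarrow> c \<in> L \<and> poly_over L p"
  by (auto simp: poly_over_def coeff_pCons split: nat.split)

lemma poly_over_pcompose: "poly_over L p \<Longrightarrow> poly_over L q \<Longrightarrow> poly_over L (p \<circ>\<^sub>p q)"
  by (induction p)
    (auto simp: pcompose_pCons poly_over_pCons poly_over_0 intro!: poly_over_add poly_over_mult)

lemma poly_over_if_Rats: "(\<And>i. coeff p i \<in> \<rat>) \<Longrightarrow> poly_over L p"
  using Rats_subset_subfield[OF L] by (auto simp: poly_over_def)

lemma poly_over_divmod:
  assumes "poly_over L p" "poly_over L q" "q \<noteq> 0"
  obtains s r where "poly_over L s" "poly_over L r" "p = s * q + r" "r = 0 \<or> degree r < degree q"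
  using assms(1)
proof (induction "degree p" arbitrary: p thesis rule: less_induct)
  case less
  show ?case
  proof (cases "p = 0 \<or> degree p < degree q")
    case True
    then show ?thesis
      using less.prems by (intro less.prems(1)[of 0 p]) (auto simp: poly_over_0)
  next
    case False
    then have p: "p \<noteq> 0" "degree q \<le> degree p"
      by auto
    \<comment> \<open>one step of long division cancels the leading term of \<open>p\<close>\<close>
    define t where "t = monom (lead_coeff p / lead_coeff q) (degree p - degree q)"
    define p' where "p' = p - t * q"
    have t: "poly_over L t"
      using less.prems(2) assms(2) unfolding t_def poly_over_def
      by (intro allI poly_over_monom[unfolded poly_over_def, rule_format] subfield_divide[OF L]) auto
    have p': "poly_over L p'"
      unfolding p'_def by (intro poly_over_diff poly_over_mult less.prems(2) t assms(2))
    have "degree (t * q) = degree p"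
      using p assms(3) by (simp add: t_def degree_mult_eq degree_monom_eq)
    moreover have "lead_coeff (t * q) = lead_coeff p"
      using p assms(3) unfolding lead_coeff_mult by (simp add: t_def degree_monom_eq)
    ultimately have "p' = 0 \<or> degree p' < degree p"
      unfolding p'_def by (intro eq_zero_or_degree_less degree_diff_le) auto
    then obtain s r where sr: "poly_over L s" "poly_over L r" "p' = s * q + r"
        "r = 0 \<or> degree r < degree q"
    proof
      assume "p' = 0"
      then show thesis
        using that[of 0 0] by (auto simp: poly_over_0)
    qed (use less.hyps p' in blast)
    have "p = (s + t) * q + r"
      using sr(3) by (simp add: p'_def algebra_simps)
    then show ?thesis
      using sr t by (intro less.prems(1)[of "s + t" r]) (auto intro: poly_over_add)
  qed
qed

end


section \<open>The primitive element theorem for real number fields\<close>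

lemma unique_common_root_in_subfield:
  fixes \<beta> :: complex
  assumes L: "is_subfield L"
    and g: "poly_over L g" "g \<noteq> 0" "poly g \<beta> = 0"
    and h: "poly_over L h" "h \<noteq> 0" "poly h \<beta> = 0"
    and unique: "\<And>z. poly g z = 0 \<Longrightarrow> poly h z = 0 \<Longrightarrow> z = \<beta>"
  shows "\<beta> \<in> L"
proof -
  define S where "S = {P. P \<noteq> 0 \<and> poly_over L P \<and> poly P \<beta> = 0}"
  have "g \<in> S" "0 \<notin> S"
    using g by (auto simp: S_def)
  moreover have "smult (inverse (lead_coeff P)) P \<in> S" if "P \<in> S" for P
    using that by (auto simp: S_def poly_over_def intro!: subfield_mult[OF L] subfield_inverse[OF L])
  ultimately obtain G where G: "G \<in> S" "lead_coeff G = 1"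
    and least: "\<And>P. P \<in> S \<Longrightarrow> degree G \<le> degree P"
    using obtain_monic_least_degree[of g S] by blast
  \<comment> \<open>\<open>G\<close> is the minimal polynomial of \<open>\<beta>\<close> over \<open>L\<close>\<close>
  have G_dvd: "G dvd P" if P: "poly_over L P" "poly P \<beta> = 0" for P
  proof -
    obtain s r where sr: "poly_over L s" "poly_over L r" "P = s * G + r" "r = 0 \<or> degree r < degree G"
      using poly_over_divmod[OF L P(1)] G(1) by (auto simp: S_def)
    have "poly r \<beta> = 0"
      using sr(3) P(2) G(1) by (simp add: S_def)
    then have "r = 0"
      using least[of r] sr(2,4) unfolding S_def by force
    then show ?thesis
      using sr(3) by simp
  qed
  have "{z. poly G z = 0} = {\<beta>}"
    using G(1) unique G_dvd[OF g(1,3)] G_dvd[OF h(1,3)]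
    by (auto simp: S_def poly_eq_0_iff_dvd intro: dvd_trans)
  then have G_eq: "G = [:-\<beta>, 1:] ^ order \<beta> G"
    using complex_poly_decompose[of G] G(2) by simp
  define n where "n = order \<beta> G"
  have "n \<noteq> 0"
    using G(1) by (auto simp: S_def n_def order_root)
  have "coeff G (n - 1) \<in> L"
    using G(1) by (simp add: S_def poly_over_def)
  also have "coeff G (n - 1) = - of_nat n * \<beta>"
    using \<open>n \<noteq> 0\<close> by (subst G_eq) (simp add: coeff_linear_poly_power n_def binomial_symmetric[symmetric])
  finally have "(- of_nat n * \<beta>) / (- of_nat n) \<in> L"
    by (intro subfield_divide[OF L] subfield_uminus[OF L] subfield_of_nat[OF L])
  then show ?thesis
    using \<open>n \<noteq> 0\<close> by simp
qed

lemma primitive_element_complex: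
  fixes \<alpha> \<beta> :: complex
  assumes "algebraic \<alpha>" "algebraic \<beta>"
  obtains c :: rat where "\<alpha> \<in> gen_field (\<alpha> + of_rat c * \<beta>)" "\<beta> \<in> gen_field (\<alpha> + of_rat c * \<beta>)"
proof -
  obtain f g where f: "\<And>i. coeff f i \<in> \<rat>" "f \<noteq> 0" "poly f \<alpha> = 0"
    and g: "\<And>i. coeff g i \<in> \<rat>" "g \<noteq> 0" "poly g \<beta> = 0"
    using assms unfolding algebraic_altdef by metis
  \<comment> \<open>for \<open>c \<notin> Bad\<close>, \<open>\<beta>\<close> is the only common root of \<open>g\<close> and \<open>f(\<theta> - c X)\<close>\<close>
  define Bad where "Bad = insert 0 ((\<lambda>(x, z). (x - \<alpha>) / (\<beta> - z)) ` ({x. poly f x = 0} \<times> {z. poly g z = 0}))"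
  have "finite Bad"
    using f g by (simp add: Bad_def poly_roots_finite)
  then have "\<not> \<rat> \<subseteq> Bad"
    using Rats_infinite finite_subset by blast
  then obtain c :: rat where c: "of_rat c \<notin> Bad"
    by (auto elim: Rats_cases)
  define \<theta> where "\<theta> = \<alpha> + of_rat c * \<beta>"
  define L where "L = gen_field \<theta>"
  have L: "is_subfield L" "\<theta> \<in> L"
    by (simp_all add: L_def is_subfield_gen_field gen_field_self)
  define h where "h = f \<circ>\<^sub>p [:\<theta>, - of_rat c:]"
  have "\<beta> \<in> L"
  proof (rule unique_common_root_in_subfield[OF L(1) _ g(2,3), of h])
    show "poly_over L g"
      using g(1) by (rule poly_over_if_Rats[OF L(1)])
    show "poly_over L h"
      unfolding h_def
      by (rule poly_over_pcompose[OF L(1) poly_over_if_Rats[OF L(1) f(1)]])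
        (use L in \<open>simp add: poly_over_pCons poly_over_0 subfield_uminus subfield_of_rat\<close>)
    show "h \<noteq> 0"
      using c f(2) by (auto simp: h_def Bad_def pcompose_eq_0_iff)
    show "poly h \<beta> = 0"
      using f(3) by (simp add: h_def poly_pcompose \<theta>_def)
  next
    fix z assume z: "poly g z = 0" "poly h z = 0"
    show "z = \<beta>"
    proof (rule ccontr)
      assume "z \<noteq> \<beta>"
      then have "of_rat c = ((\<theta> - of_rat c * z) - \<alpha>) / (\<beta> - z)"
        by (simp add: \<theta>_def field_simps)
      moreover have "poly f (\<theta> - of_rat c * z) = 0"
        using z(2) by (simp add: h_def poly_pcompose mult.commute)
      ultimately have "of_rat c \<in> Bad"
        unfolding Bad_def using z(1) by (intro insertI2 rev_image_eqI[of "(\<theta> - of_rat c * z, z)"]) auto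
      with c show False
        by contradiction
    qed
  qed
  moreover have "\<alpha> = \<theta> - of_rat c * \<beta>"
    by (simp add: \<theta>_def)
  ultimately have "\<alpha> \<in> L"
    using L by (simp add: subfield_diff subfield_mult subfield_of_rat)
  with \<open>\<beta> \<in> L\<close> show ?thesis
    by (intro that[of c]) (simp_all add: L_def \<theta>_def)
qed

lemma of_real_of_rat: "of_real (of_rat q) = (of_rat q :: 'a::real_field)"
  by (cases q) (simp add: of_rat_rat)

lemma is_subfield_image_of_real:
  "is_subfield L \<Longrightarrow> is_subfield ((of_real :: real \<Rightarrow> 'a::{real_field, field_char_0}) ` L)"
  unfolding is_subfield_def
  by (auto simp flip: of_real_add of_real_diff of_real_mult of_real_inverse intro!: imageI)

lemma of_real_mem_gen_field_of_realD:
  "(of_real y :: complex) \<in> gen_field (of_real x) \<Longrightarrow> y \<in> gen_field x"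
  using gen_field_minimal[OF is_subfield_image_of_real[OF is_subfield_gen_field] imageI[OF gen_field_self]]
  by (metis (no_types) image_iff of_real_eq_iff subsetD)

lemma primitive_element_real:
  fixes \<alpha> \<beta> :: real
  assumes "algebraic \<alpha>" "algebraic \<beta>"
  obtains c :: rat where "\<alpha> \<in> gen_field (\<alpha> + of_rat c * \<beta>)" "\<beta> \<in> gen_field (\<alpha> + of_rat c * \<beta>)"
proof -
  obtain c :: rat where "of_real \<alpha> \<in> gen_field (of_real \<alpha> + of_rat c * of_real \<beta> :: complex)"
    "of_real \<beta> \<in> gen_field (of_real \<alpha> + of_rat c * of_real \<beta> :: complex)"
    using assms by (blast intro: primitive_element_complex)
  moreover have "of_real (\<alpha> + of_rat c * \<beta>) = (of_real \<alpha> + of_rat c * of_real \<beta> :: complex)"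
    by (simp add: of_real_of_rat)
  ultimately show ?thesis
    by (metis that of_real_mem_gen_field_of_realD)
qed

lemma subfield_hull_finite_eq_gen_field:
  fixes F K :: "real set"
  assumes K: "is_subfield K" "\<And>x. x \<in> K \<Longrightarrow> algebraic x" and "finite F" "F \<subseteq> K"
  shows "\<exists>\<gamma>. subfield_hull F = gen_field \<gamma>"
  using assms(3,4)
proof (induction F rule: finite_induct)
  case empty
  have "subfield_hull {} = gen_field 0"
    by (intro equalityI subfield_hull_minimal gen_field_minimal is_subfield_gen_field
        is_subfield_subfield_hull subfield_0) simp
  then show ?case ..
next
  case (insert b F)
  then obtain \<gamma> where \<gamma>: "subfield_hull F = gen_field \<gamma>"
    by auto
  have "\<gamma> \<in> K"
    using gen_field_self[of \<gamma>] subfield_hull_minimal[OF K(1), of F] insert.prems \<gamma> by auto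
  then obtain c where c: "\<gamma> \<in> gen_field (\<gamma> + of_rat c * b)" "b \<in> gen_field (\<gamma> + of_rat c * b)"
    using insert.prems K(2) by (metis insert_subset primitive_element_real)
  define \<theta> where "\<theta> = \<gamma> + of_rat c * b"
  have "subfield_hull (insert b F) \<subseteq> gen_field \<theta>"
  proof (rule subfield_hull_minimal[OF is_subfield_gen_field])
    have "F \<subseteq> gen_field \<gamma>"
      using \<gamma> subfield_hull_subset by blast
    also have "\<dots> \<subseteq> gen_field \<theta>"
      using c(1) by (simp add: \<theta>_def gen_field_minimal is_subfield_gen_field)
    finally show "insert b F \<subseteq> gen_field \<theta>"
      using c(2) by (simp add: \<theta>_def)
  qed
  moreover have "\<theta> \<in> subfield_hull (insert b F)"
  proof -
    have "\<gamma> \<in> subfield_hull (insert b F)"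
      using gen_field_self[of \<gamma>] subfield_hull_mono[of F "insert b F"] \<gamma> by auto
    moreover have "b \<in> subfield_hull (insert b F)"
      using subfield_hull_subset by blast
    ultimately show ?thesis
      unfolding \<theta>_def using is_subfield_subfield_hull
      by (intro subfield_add subfield_mult subfield_of_rat)
  qed
  then have "gen_field \<theta> \<subseteq> subfield_hull (insert b F)"
    by (intro gen_field_minimal is_subfield_subfield_hull)
  ultimately show ?case
    by blast
qed

interpretation rat_real: vector_space "\<lambda>(q::rat) (x::real). of_rat q * x"
  by unfold_locales (auto simp: algebra_simps of_rat_add of_rat_mult)

lemma algebraic_if_powers_in_finite_span:
  fixes x :: real
  assumes B: "finite B" and span: "\<And>i. x ^ i \<in> rat_real.span B"
  shows "algebraic x"
proof (cases "inj_on (\<lambda>i. x ^ i) {..card B}")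
  case False
  then obtain i j where ij: "i \<noteq> j" "x ^ i = x ^ j"
    unfolding inj_on_def by blast
  have "monom 1 i - monom (1 :: real) j \<noteq> 0"
    using ij(1) by (simp add: monom_eq_iff')
  then show ?thesis
    using ij(2) by (intro algebraicI'[of "monom 1 i - monom 1 j"]) (auto simp: poly_monom)
next
  case True
  define T where "T = (\<lambda>i. x ^ i) ` {..card B}"
  have "card T = Suc (card B)"
    unfolding T_def using True by (simp add: card_image)
  moreover have "T \<subseteq> rat_real.span B"
    unfolding T_def using span by blast
  ultimately have "rat_real.dependent T"
    using rat_real.independent_span_bound[OF B, of T] by linarith
  then obtain t u where tu: "t \<subseteq> T" "(\<Sum>v\<in>t. of_rat (u v) * v) = 0" "\<exists>v\<in>t. u v \<noteq> 0"
    unfolding rat_real.dependent_explicit by blast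
  define I where "I = {i \<in> {..card B}. x ^ i \<in> t}"
  have t_eq: "t = (\<lambda>i. x ^ i) ` I"
    using tu(1) unfolding T_def I_def by blast
  have inj_I: "inj_on (\<lambda>i. x ^ i) I"
    using True by (rule inj_on_subset) (auto simp: I_def)
  have "finite I"
    by (simp add: I_def)
  define p :: "real poly" where "p = (\<Sum>i\<in>I. monom (of_rat (u (x ^ i))) i)"
  have coeff_p: "coeff p k = (if k \<in> I then of_rat (u (x ^ k)) else 0)" for k
    using \<open>finite I\<close> by (simp add: p_def coeff_sum)
  obtain i where "i \<in> I" "u (x ^ i) \<noteq> 0"
    using tu(3) t_eq by blast
  then have "p \<noteq> 0"
    using coeff_p[of i] by auto
  moreover have "poly p x = (\<Sum>v\<in>t. of_rat (u v) * v)"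
    unfolding t_eq sum.reindex[OF inj_I] by (simp add: p_def poly_sum poly_monom)
  ultimately show ?thesis
    using tu(2) by (intro algebraicI'[of p]) (simp_all add: coeff_p)
qed

lemma real_number_field_eq_subfield_hull:
  assumes "real_number_field K"
  obtains B where "finite B" "B \<subseteq> K" "K \<subseteq> rat_real.span B" "K = subfield_hull B"
proof -
  obtain B where B: "finite B" "B \<subseteq> K" "\<And>x. x \<in> K \<Longrightarrow> \<exists>c. x = (\<Sum>b\<in>B. of_rat (c b) * b)"
    and K: "is_subfield K"
    using assms unfolding real_number_field_def by blast
  have "K \<subseteq> rat_real.span B"
    using B by (fastforce simp: rat_real.span_finite image_iff)
  moreover have "K \<subseteq> subfield_hull B"
    using B(3) subfield_hull_subset[of B]
    by (force intro: subfield_sum subfield_mult subfield_of_rat is_subfield_subfield_hull)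
  ultimately show ?thesis
    using that B(1,2) subfield_hull_minimal[OF K B(2)] by blast
qed

lemma real_number_field_algebraic:
  assumes "real_number_field K" "x \<in> K"
  shows "algebraic x"
proof -
  obtain B where "finite B" "K \<subseteq> rat_real.span B" "K = subfield_hull B"
    using assms(1) by (rule real_number_field_eq_subfield_hull)
  then show ?thesis
    using assms(2) is_subfield_subfield_hull
    by (intro algebraic_if_powers_in_finite_span) (auto intro: subfield_power)
qed

lemma real_number_field_primitive_element:
  assumes "real_number_field K"
  shows "\<exists>\<gamma>. gen_field \<gamma> = K"
proof -
  obtain B where B: "finite B" "B \<subseteq> K" "K = subfield_hull B"
    using assms by (rule real_number_field_eq_subfield_hull)
  have "is_subfield K"
    using assms by (simp add: real_number_field_def)
  then obtain \<gamma> where "subfield_hull B = gen_field \<gamma>"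
    using subfield_hull_finite_eq_gen_field[OF _ _ B(1,2)] real_number_field_algebraic[OF assms]
    by blast
  then show ?thesis
    using B(3) by auto
qed


section \<open>Rational translates\<close>

lemma is_min_poly_add_of_rat:
  fixes \<gamma> :: "'a::field_char_0"
  assumes min: "is_min_poly \<gamma> p"
  shows "is_min_poly (\<gamma> + of_rat q) (p \<circ>\<^sub>p [:-q, 1:])"
  unfolding is_min_poly_def
proof (intro conjI allI impI)
  have p: "p \<noteq> 0" "lead_coeff p = 1" "poly (map_poly of_rat p) \<gamma> = 0"
    using min by (auto simp: is_min_poly_def)
  have lin: "poly (map_poly of_rat [:c, 1:]) y = y + of_rat c" for c and y :: 'a
    by (simp add: map_poly_pCons)
  show "p \<circ>\<^sub>p [:- q, 1:] \<noteq> 0" "lead_coeff (p \<circ>\<^sub>p [:- q, 1:]) = 1"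
    using p by (simp_all add: pcompose_eq_0_iff lead_coeff_comp)
  show "poly (map_poly of_rat (p \<circ>\<^sub>p [:- q, 1:])) (\<gamma> + of_rat q) = 0"
    using p by (simp add: poly_map_of_rat_pcompose lin of_rat_minus)
  fix r :: "rat poly"
  assume r: "r \<noteq> 0 \<and> poly (map_poly of_rat r) (\<gamma> + of_rat q) = 0"
  then have "r \<circ>\<^sub>p [:q, 1:] \<noteq> 0" "poly (map_poly of_rat (r \<circ>\<^sub>p [:q, 1:])) \<gamma> = 0"
    by (simp_all add: pcompose_eq_0_iff poly_map_of_rat_pcompose lin)
  then have "degree p \<le> degree (r \<circ>\<^sub>p [:q, 1:])"
    using min by (auto simp: is_min_poly_def)
  then show "degree (p \<circ>\<^sub>p [:- q, 1:]) \<le> degree r"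
    by (simp add: degree_pcompose)
qed

lemma coeff_pcompose_linear_shift:
  fixes p :: "'a::comm_ring_1 poly"
  assumes "degree p = Suc n"
  shows "coeff (p \<circ>\<^sub>p [:a, 1:]) n = coeff p n + of_nat (Suc n) * a * lead_coeff p"
proof -
  have "p \<circ>\<^sub>p [:a, 1:] = (\<Sum>i\<le>Suc n. smult (coeff p i) ([:a, 1:] ^ i))"
    using assms by (simp add: pcompose_altdef poly_altdef degree_map_poly coeff_map_poly
        flip: smult_conv_map_poly)
  then have "coeff (p \<circ>\<^sub>p [:a, 1:]) n =
      (\<Sum>i\<le>n. coeff p i * coeff ([:a, 1:] ^ i) n) + lead_coeff p * coeff ([:a, 1:] ^ Suc n) n"
    using assms by (simp add: coeff_sum)
  also have "(\<Sum>i\<le>n. coeff p i * coeff ([:a, 1:] ^ i) n) = (\<Sum>i\<le>n. if i = n then coeff p i else 0)"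
    by (rule sum.cong) (auto simp: coeff_linear_power coeff_eq_0 degree_linear_power)
  also have "coeff ([:a, 1:] ^ Suc n) n = of_nat (Suc n) * a"
    by (subst coeff_linear_poly_power) (simp_all add: binomial_symmetric[of n "Suc n", simplified])
  finally show ?thesis
    by (simp add: algebra_simps)
qed


lemma min_poly_has_odd_term_add_of_rat:
  fixes \<gamma> :: "'a::field_char_0"
  assumes min: "is_min_poly \<gamma> p" and q: "q \<noteq> coeff p (degree p - 1) / of_nat (degree p)"
  shows "min_poly_has_odd_term (\<gamma> + of_rat q)"
proof -
  define P where "P = p \<circ>\<^sub>p [:-q, 1:]"
  have min_P: "is_min_poly (\<gamma> + of_rat q) P"
    unfolding P_def using min by (rule is_min_poly_add_of_rat)
  have p: "p \<noteq> 0" "lead_coeff p = 1" "poly (map_poly of_rat p) \<gamma> = 0"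
    using min by (auto simp: is_min_poly_def)
  have "degree p \<noteq> 0"
  proof
    assume "degree p = 0"
    then have "p = 1"
      using p(2) by (metis degree_0_id one_pCons)
    with p(3) show False
      by simp
  qed
  then obtain n where n: "degree p = Suc n"
    using not0_implies_Suc by blast
  have "\<exists>k. odd k \<and> coeff P k \<noteq> 0"
  proof (cases "odd (degree p)")
    case True
    have "coeff P (degree p) = 1"
      using min_P by (simp add: is_min_poly_def P_def degree_pcompose)
    with True show ?thesis
      by (metis one_neq_zero)
  next
    case False
    have "coeff P n = coeff p n - of_nat (Suc n) * q"
      unfolding P_def using n p(2) by (simp add: coeff_pcompose_linear_shift)
    also have "\<dots> \<noteq> 0"
      using q n by (auto simp: field_simps simp del: of_nat_Suc)
    finally show ?thesis
      using False n by auto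
  qed
  with min_P show ?thesis
    unfolding min_poly_has_odd_term_def by blast
qed

lemma closure_eq_UNIV_if_rational_translates:
  fixes \<gamma> :: real
  assumes "\<And>q. q \<noteq> b \<Longrightarrow> \<gamma> + of_rat q \<in> S"
  shows "closure S = UNIV"
proof -
  have "y \<in> closure S" for y
    unfolding closure_approachable
  proof (intro allI impI)
    fix e :: real
    assume "e > 0"
    \<comment> \<open>two distinct rationals close to \<open>y - \<gamma>\<close>, one of which is not \<open>b\<close>\<close>
    obtain r1 where r1: "r1 \<in> \<rat>" "y - \<gamma> < r1" "r1 < y - \<gamma> + e"
      using Rats_dense_in_real[of "y - \<gamma>" "y - \<gamma> + e"] \<open>e > 0\<close> by auto
    obtain r2 where r2: "r2 \<in> \<rat>" "y - \<gamma> < r2" "r2 < r1"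
      using Rats_dense_in_real[of "y - \<gamma>" r1] r1 by auto
    obtain q1 q2 where "r1 = of_rat q1" "r2 = of_rat q2"
      using r1(1) r2(1) by (metis Rats_cases)
    then obtain q where q: "q \<noteq> b" "of_rat q \<in> {r1, r2}"
      using r2(3) by (cases "q1 = b") auto
    then have "dist (\<gamma> + of_rat q) y < e"
      using r1 r2 by (auto simp: dist_real_def)
    with assms[OF q(1)] show "\<exists>z\<in>S. dist z y < e"
      by blast
  qed
  then show ?thesis
    by blast
qed

theorem claim3p5:
  shows "(\<forall>\<alpha> :: complex. algebraic \<alpha> \<and> min_poly_has_odd_term \<alpha> \<longrightarrow>
            gen_field \<alpha> = gen_field (\<alpha>\<^sup>2)) \<and>
         (\<forall>K :: real set. real_number_field K \<longrightarrow>
            closure {\<alpha>. gen_field \<alpha> = K \<and> min_poly_has_odd_term \<alpha>} = UNIV)"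
proof (intro conjI allI impI)
  fix \<alpha> :: complex
  assume "algebraic \<alpha> \<and> min_poly_has_odd_term \<alpha>"
  then show "gen_field \<alpha> = gen_field (\<alpha>\<^sup>2)"
    unfolding min_poly_has_odd_term_def using gen_field_eq_gen_field_square by blast
next
  fix K :: "real set"
  assume K: "real_number_field K"
  then obtain \<gamma> where \<gamma>: "gen_field \<gamma> = K"
    using real_number_field_primitive_element by blast
  then have "algebraic \<gamma>"
    using real_number_field_algebraic[OF K] gen_field_self by blast
  then obtain p where min: "is_min_poly \<gamma> p"
    using is_min_poly_exists by blast
  show "closure {\<alpha>. gen_field \<alpha> = K \<and> min_poly_has_odd_term \<alpha>} = UNIV"
    by (rule closure_eq_UNIV_if_rational_translates
        [where \<gamma> = \<gamma> and b = "coeff p (degree p - 1) / of_nat (degree p)"])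
      (simp add: gen_field_add_of_rat \<gamma> min_poly_has_odd_term_add_of_rat[OF min])
qed

end
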